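(* Let $n$ be a positive integer and let $f\colon\{0,1\}^n\to\mathbb{R}$ be any function with a unique global minimum. Then the expected optimization time of the (1+1)~EA minimizing $f$ is at least the expected optimization time of the (1+1)~EA minimizing $\textsc{OneMax}(x)=\sum_{i=1}^n x_i$ on $\{0,1\}^n$, i.e. $\mathrm{E}[T_f]\ge\mathrm{E}[T_{\textsc{OneMax}}]$.
   Context: The (1+1)~EA minimizing $f\colon\{0,1\}^n\to\mathbb{R}$: choose $x^{(0)}\in\{0,1\}^n$ uniformly at random; for $t=0,1,2,\dots$, sample $y^{(t)}$ by flipping each bit of $x^{(t)}$ independently with probability $1/n$; set $x^{(t+1)}:=y^{(t)}$ if $f(y^{(t)})\le f(x^{(t)})$ and $x^{(t+1)}:=x^{(t)}$ otherwise. The optimization time is the random variable $T_f=\min\{t\in\mathbb{N}: f(x^{(t)})=\min_{z\in\{0,1\}^n}f(z)\}$. *)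

theory Defs
  imports "HOL-Probability.Probability"
begin

text \<open>Search space: bit strings of length n, represented as bool lists (True = 1).\<close>
definition bitstrings :: "nat \<Rightarrow> bool list set" where
  "bitstrings n = {xs. length xs = n}"

primrec mutate :: "real \<Rightarrow> bool list \<Rightarrow> bool list pmf" where
  "mutate p [] = return_pmf []"
| "mutate p (b # bs) =
     bind_pmf (bernoulli_pmf p) (\<lambda>c.
     bind_pmf (mutate p bs) (\<lambda>r.
     return_pmf ((if c then \<not> b else b) # r)))"

definition ea_step :: "(bool list \<Rightarrow> real) \<Rightarrow> nat \<Rightarrow> bool list \<Rightarrow> bool list pmf" where
  "ea_step f n x =
     bind_pmf (mutate (1 / real n) x) (\<lambda>y. return_pmf (if f y \<le> f x then y else x))"

primrec ea_traj :: "(bool list \<Rightarrow> real) \<Rightarrow> nat \<Rightarrow> nat \<Rightarrow> bool list list pmf" where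
  "ea_traj f n 0 = map_pmf (\<lambda>x. [x]) (pmf_of_set (bitstrings n))"
| "ea_traj f n (Suc t) =
     bind_pmf (ea_traj f n t) (\<lambda>xs.
     map_pmf (\<lambda>y. xs @ [y]) (ea_step f n (last xs)))"

definition opt_value :: "(bool list \<Rightarrow> real) \<Rightarrow> nat \<Rightarrow> real" where
  "opt_value f n = Min (f ` bitstrings n)"

text \<open>Expected optimization time E[T_f] via the tail-sum formula
  E[T] = sum_{t>=0} Pr[T > t], where T > t iff none of x(0..t) is optimal
  (value in ennreal, possibly infinite).\<close>
definition expected_opt_time :: "(bool list \<Rightarrow> real) \<Rightarrow> nat \<Rightarrow> ennreal" where
  "expected_opt_time f n =
     (\<Sum>t. ennreal (measure_pmf.prob (ea_traj f n t)
                      {xs. \<forall>x\<in>set xs. f x \<noteq> opt_value f n}))"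

definition onemax :: "bool list \<Rightarrow> real" where
  "onemax xs = real (length (filter id xs))"

end

theory Submission
  imports Defs
begin

(*
  The proof compares both runs with a one-dimensional "elitist distance process":
  a walk on {0..n} that, from distance d > 0 to a fixed target z, mutates a string at
  Hamming distance d from z and moves to min d k, where k is the distance of the
  offspring.  Let elitist_surv t d be the probability that this walk, started at d,
  avoids 0 during steps 0..t.  Three facts are established:
   (1) elitist_surv t is monotone in d when the mutation rate is at most 1/2;
       this is a one-bit coupling argument on the mismatch-count distribution;
   (2) for every f with unique optimum z, the probability that the EA started at x
       has not met z within t steps is at least elitist_surv t (hamming x z): an
       accepted offspring never lies closer to z than min d k, and (1) applies;
   (3) for OneMax (target: the all-zero string) the bound of (2) is an equality.
  Averaging over the uniform start (invariant under translating z to the zero string)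
  gives Pr[T_OneMax > t] <= Pr[T_f > t] for every t; summing over t proves the claim.
*)

lemma integrable_unit_valued:
  fixes g :: "'a \<Rightarrow> real"
  assumes "\<And>x. 0 \<le> g x \<and> g x \<le> 1"
  shows "integrable (measure_pmf M) g"
  using assms by (intro measure_pmf.integrable_const_bound[where B=1]) auto

lemma expectation_unit_valued:
  fixes g :: "'a \<Rightarrow> real"
  assumes "\<And>x. 0 \<le> g x \<and> g x \<le> 1"
  shows "0 \<le> measure_pmf.expectation M g \<and> measure_pmf.expectation M g \<le> 1"
proof
  show "0 \<le> measure_pmf.expectation M g"
    using assms by (simp add: integral_nonneg)
  have "measure_pmf.expectation M g \<le> measure_pmf.expectation M (\<lambda>_. 1)"
    using assms integrable_unit_valued[OF assms] by (intro integral_mono) auto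
  then show "measure_pmf.expectation M g \<le> 1"
    by simp
qed

lemma expectation_mono_on_support:
  fixes f g :: "'a \<Rightarrow> real"
  assumes "\<And>x. 0 \<le> f x \<and> f x \<le> 1" "\<And>x. 0 \<le> g x \<and> g x \<le> 1"
    and "\<And>x. x \<in> set_pmf M \<Longrightarrow> f x \<le> g x"
  shows "measure_pmf.expectation M f \<le> measure_pmf.expectation M g"
  using integrable_unit_valued[OF assms(1)] integrable_unit_valued[OF assms(2)] assms(3)
  by (intro integral_mono_AE) (auto intro: AE_pmfI)

lemma expectation_cong_on_support:
  fixes f g :: "'a \<Rightarrow> real"
  assumes "\<And>x. x \<in> set_pmf M \<Longrightarrow> f x = g x"
  shows "measure_pmf.expectation M f = measure_pmf.expectation M g"
  using assms by (intro integral_cong_AE) (auto intro: AE_pmfI)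

lemma expectation_bind_pmf:
  fixes f :: "'b \<Rightarrow> real"
  assumes "\<And>x. \<bar>f x\<bar> \<le> B"
  shows "measure_pmf.expectation (bind_pmf M N) f
       = measure_pmf.expectation M (\<lambda>x. measure_pmf.expectation (N x) f)"
  unfolding measure_pmf_bind
  using assms
  by (intro integral_bind[where K="count_space UNIV" and B=B and B'=1])
     (auto simp: measure_pmf.emeasure_space_1 measure_pmf_in_subprob_algebra)

lemma expectation_coin_shift:
  fixes g :: "nat \<Rightarrow> real"
  assumes "0 \<le> p" "p \<le> 1" "\<And>k. 0 \<le> g k \<and> g k \<le> 1"
  shows "measure_pmf.expectation
           (bind_pmf (bernoulli_pmf p) (\<lambda>c. map_pmf (\<lambda>k. k + (if c then u else v)) Y)) g
       = p * measure_pmf.expectation Y (\<lambda>k. g (k + u))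
         + (1 - p) * measure_pmf.expectation Y (\<lambda>k. g (k + v))"
proof -
  have "\<bar>g k\<bar> \<le> 1" for k
    using assms(3)[of k] by simp
  then show ?thesis
    using assms by (subst expectation_bind_pmf[where B=1]) (auto simp: mult.commute)
qed

lemma finite_bitstrings: "finite (bitstrings n)"
proof -
  have "finite {xs. set xs \<subseteq> (UNIV :: bool set) \<and> length xs = n}"
    by (rule finite_lists_length_eq) simp
  then show ?thesis
    unfolding bitstrings_def by simp
qed

lemma bitstrings_nonempty: "bitstrings n \<noteq> {}"
  unfolding bitstrings_def by (auto intro!: exI[of _ "replicate n False"])

fun hamming :: "bool list \<Rightarrow> bool list \<Rightarrow> nat" where
  "hamming (a # as) (b # bs) = (if a \<noteq> b then 1 else 0) + hamming as bs"
| "hamming _ _ = 0"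

lemma hamming_le_length: "hamming xs ys \<le> length xs"
  by (induction xs ys rule: hamming.induct) auto

lemma hamming_eq_0_iff: "length xs = length ys \<Longrightarrow> hamming xs ys = 0 \<longleftrightarrow> xs = ys"
  by (induction xs ys rule: hamming.induct) auto

lemma onemax_eq_hamming: "onemax x = real (hamming x (replicate (length x) False))"
proof -
  have "hamming x (replicate (length x) False) = length (filter id x)"
    by (induction x) auto
  then show ?thesis
    by (simp add: onemax_def)
qed

lemma opt_value_onemax: "opt_value onemax n = 0"
  unfolding opt_value_def
  using finite_bitstrings
  by (intro Min_eqI) (auto simp: bitstrings_def onemax_def intro!: image_eqI[of _ _ "replicate n False"])

definition xor_list :: "bool list \<Rightarrow> bool list \<Rightarrow> bool list" where
  "xor_list x z = map2 (\<noteq>) x z"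

lemma xor_list_involution: "length x = length z \<Longrightarrow> xor_list (xor_list x z) z = x"
  unfolding xor_list_def by (induction x z rule: list_induct2) auto

lemma length_xor_list: "length x = length z \<Longrightarrow> length (xor_list x z) = length x"
  by (simp add: xor_list_def)

lemma hamming_xor_list:
  "length x = n \<Longrightarrow> length z = n \<Longrightarrow> hamming (xor_list x z) (replicate n False) = hamming x z"
proof (induction x z arbitrary: n rule: list_induct2')
  case (4 a x b z)
  then show ?case by (cases n) (auto simp: xor_list_def)
qed (auto simp: xor_list_def)

lemma sum_hamming_translate:
  assumes z: "z \<in> bitstrings n"
  shows "(\<Sum>x\<in>bitstrings n. g (hamming x z)) = (\<Sum>x\<in>bitstrings n. g (hamming x (replicate n False)))"
  using z
  by (intro sum.reindex_bij_witness[where i="\<lambda>x. xor_list x z" and j="\<lambda>x. xor_list x z"])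
     (auto simp: bitstrings_def length_xor_list xor_list_involution hamming_xor_list)

section \<open>Distance of a mutated string to a target\<close>

text \<open>mismatch_pmf p a b: number of positions differing from a target after flipping every
  bit with probability p, starting from a positions that differ and b positions that agree.\<close>
fun mismatch_pmf :: "real \<Rightarrow> nat \<Rightarrow> nat \<Rightarrow> nat pmf" where
  "mismatch_pmf p (Suc a) b =
     bind_pmf (bernoulli_pmf p) (\<lambda>c. map_pmf (\<lambda>k. k + (if c then 0 else 1)) (mismatch_pmf p a b))"
| "mismatch_pmf p 0 (Suc b) =
     bind_pmf (bernoulli_pmf p) (\<lambda>c. map_pmf (\<lambda>k. k + (if c then 1 else 0)) (mismatch_pmf p 0 b))"
| "mismatch_pmf p 0 0 = return_pmf 0"

text \<open>The agreeing positions may equally be processed first (the coins commute).\<close>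
lemma mismatch_pmf_Suc_agree:
  "mismatch_pmf p a (Suc b) =
     bind_pmf (bernoulli_pmf p) (\<lambda>c. map_pmf (\<lambda>k. k + (if c then 1 else 0)) (mismatch_pmf p a b))"
proof (induction a)
  case 0
  then show ?case by simp
next
  case (Suc a)
  have "mismatch_pmf p (Suc a) (Suc b)
      = bind_pmf (bernoulli_pmf p) (\<lambda>c. bind_pmf (bernoulli_pmf p) (\<lambda>c'.
          map_pmf (\<lambda>k. k + (if c' then 1 else 0) + (if c then 0 else 1)) (mismatch_pmf p a b)))"
    by (simp add: Suc map_bind_pmf map_pmf_comp)
  also have "\<dots> = bind_pmf (bernoulli_pmf p) (\<lambda>c'. bind_pmf (bernoulli_pmf p) (\<lambda>c.
          map_pmf (\<lambda>k. k + (if c' then 1 else 0) + (if c then 0 else 1)) (mismatch_pmf p a b)))"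
    by (rule bind_commute_pmf)
  also have "\<dots> = bind_pmf (bernoulli_pmf p) (\<lambda>c.
          map_pmf (\<lambda>k. k + (if c then 1 else 0)) (mismatch_pmf p (Suc a) b))"
    by (simp add: map_bind_pmf map_pmf_comp add_ac)
  finally show ?case .
qed

lemma mutate_length: "y \<in> set_pmf (mutate p x) \<Longrightarrow> length y = length x"
  by (induction x arbitrary: y) auto

lemma hamming_mutate:
  assumes "length x = length z"
  shows "map_pmf (\<lambda>y. hamming y z) (mutate p x)
       = mismatch_pmf p (hamming x z) (length x - hamming x z)"
  using assms
proof (induction x arbitrary: z)
  case Nil
  then show ?case by simp
next
  case (Cons b bs)
  then obtain c cs where z: "z = c # cs" and len: "length bs = length cs"
    by (cases z) auto
  have IH: "map_pmf (\<lambda>y. hamming y cs) (mutate p bs) = mismatch_pmf p (hamming bs cs) (length bs - hamming bs cs)"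
    using Cons.IH len by simp
  have "map_pmf (\<lambda>y. hamming y z) (mutate p (b # bs))
      = bind_pmf (bernoulli_pmf p) (\<lambda>c'. map_pmf (\<lambda>k. (if (if c' then \<not> b else b) \<noteq> c then 1 else 0) + k)
          (map_pmf (\<lambda>y. hamming y cs) (mutate p bs)))"
    by (simp add: z map_bind_pmf map_pmf_comp map_pmf_def[symmetric] bind_map_pmf)
  also have "\<dots> = mismatch_pmf p (hamming (b # bs) z) (length (b # bs) - hamming (b # bs) z)"
  proof (cases "b = c")
    case True
    then have agree: "length (b # bs) - hamming (b # bs) z = Suc (length bs - hamming bs cs)"
      using hamming_le_length[of bs cs] z by simp
    show ?thesis
      unfolding agree mismatch_pmf_Suc_agree IH using True z
      by (intro bind_pmf_cong refl) (auto intro!: map_pmf_cong)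
  next
    case False
    then have differ: "length (b # bs) - hamming (b # bs) z = length bs - hamming bs cs"
        "hamming (b # bs) z = Suc (hamming bs cs)"
      using z by auto
    show ?thesis
      unfolding differ mismatch_pmf.simps IH using False z
      by (intro bind_pmf_cong refl) (auto intro!: map_pmf_cong)
  qed
  finally show ?case .
qed

section \<open>The elitist distance process\<close>

primrec elitist_surv :: "real \<Rightarrow> nat \<Rightarrow> nat \<Rightarrow> nat \<Rightarrow> real" where
  "elitist_surv p n 0 d = (if d > 0 then 1 else 0)"
| "elitist_surv p n (Suc t) d =
     (if d > 0 then measure_pmf.expectation (mismatch_pmf p d (n - d)) (\<lambda>k. elitist_surv p n t (min d k))
      else 0)"

lemma elitist_surv_unit: "0 \<le> elitist_surv p n t d \<and> elitist_surv p n t d \<le> 1"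
proof (induction t arbitrary: d)
  case 0
  then show ?case by simp
next
  case (Suc t)
  then show ?case
    using expectation_unit_valued[of "\<lambda>k. elitist_surv p n t (min d k)"] by simp
qed

lemma mono_on_atMost_by_steps:
  fixes f :: "nat \<Rightarrow> real"
  assumes "\<And>d. d < n \<Longrightarrow> f d \<le> f (Suc d)" "a \<le> b" "b \<le> n"
  shows "f a \<le> f b"
  using assms(2,3)
proof (induction b rule: dec_induct)
  case base
  then show ?case by simp
next
  case (step m)
  then show ?case using assms(1)[of m] by simp
qed

text \<open>The algebra behind the coupling: with probability p the extra bit helps the
  farther start and hurts the nearer one, with probability 1 - p conversely.\<close>
lemma coupling_inequality:
  fixes p A B A' B' :: real
  assumes "0 \<le> p" "p \<le> 1/2" "B \<le> A" "A \<le> A'" "B \<le> B'"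
  shows "p * A + (1 - p) * B \<le> p * B' + (1 - p) * A'"
proof -
  have "0 \<le> (1 - 2 * p) * (A - B)" "(1 - p) * A \<le> (1 - p) * A'" "p * B \<le> p * B'"
    using assms by (auto intro: mult_left_mono)
  then show ?thesis
    by (simp add: algebra_simps)
qed

text \<open>Starting farther from the target never helps: key monotonicity, proved by
  induction on t, coupling the extra mismatched bit with an extra agreeing bit.\<close>
lemma elitist_surv_Suc_mono:
  assumes p: "0 \<le> p" "p \<le> 1" "2 \<le> n \<Longrightarrow> p \<le> 1/2"
  shows "d < n \<Longrightarrow> elitist_surv p n t d \<le> elitist_surv p n t (Suc d)"
proof (induction t arbitrary: d)
  case 0
  then show ?case by simp
next
  case (Suc t)
  show ?case
  proof (cases "d = 0")
    case True
    then show ?thesis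
      using elitist_surv_unit[of p n "Suc t" "Suc d"] by simp
  next
    case False
    define b where "b = n - Suc d"
    define Y where "Y = mismatch_pmf p d b"
    define g where "g e k = elitist_surv p n t (min e k)" for e k
    have g_unit: "0 \<le> g e k \<and> g e k \<le> 1" for e k
      unfolding g_def using elitist_surv_unit by auto
    have g_mono: "g e k \<le> g e' k'" if "min e k \<le> min e' k'" "min e' k' \<le> n" for e k e' k'
      unfolding g_def using mono_on_atMost_by_steps[of n "elitist_surv p n t", OF Suc.IH] that by blast
    have "elitist_surv p n (Suc t) d = measure_pmf.expectation (mismatch_pmf p d (Suc b)) (g d)"
      using False Suc.prems by (simp add: b_def g_def[abs_def] Suc_diff_Suc)
    also have "\<dots> = p * measure_pmf.expectation Y (\<lambda>k. g d (k + 1))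
                  + (1 - p) * measure_pmf.expectation Y (\<lambda>k. g d (k + 0))"
      unfolding mismatch_pmf_Suc_agree Y_def by (rule expectation_coin_shift) (use p g_unit in auto)
    also have "\<dots> \<le> p * measure_pmf.expectation Y (\<lambda>k. g (Suc d) (k + 0))
                  + (1 - p) * measure_pmf.expectation Y (\<lambda>k. g (Suc d) (k + 1))"
    proof (rule coupling_inequality)
      show "p \<le> 1/2"
        using p(3) False Suc.prems by simp
    qed (use p Suc.prems in \<open>auto intro!: expectation_mono_on_support g_unit g_mono\<close>)
    also have "\<dots> = measure_pmf.expectation (mismatch_pmf p (Suc d) b) (g (Suc d))"
      unfolding mismatch_pmf.simps Y_def by (rule expectation_coin_shift[symmetric]) (use p g_unit in auto)
    also have "\<dots> = elitist_surv p n (Suc t) (Suc d)"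
      by (simp add: b_def g_def[abs_def])
    finally show ?thesis .
  qed
qed

lemma elitist_surv_mono:
  assumes "0 \<le> p" "p \<le> 1" "2 \<le> n \<Longrightarrow> p \<le> 1/2" "a \<le> b" "b \<le> n"
  shows "elitist_surv p n t a \<le> elitist_surv p n t b"
  using mono_on_atMost_by_steps[of n "elitist_surv p n t", OF elitist_surv_Suc_mono[OF assms(1-3)]]
    assms(4,5) by blast

section \<open>Survival probabilities of the (1+1) EA\<close>

text \<open>Trajectory distribution from an arbitrary initial distribution, so that the first
  step can be split off by induction.\<close>
primrec traj_from :: "(bool list \<Rightarrow> real) \<Rightarrow> nat \<Rightarrow> bool list pmf \<Rightarrow> nat \<Rightarrow> bool list list pmf" where
  "traj_from f n \<mu> 0 = map_pmf (\<lambda>x. [x]) \<mu>"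
| "traj_from f n \<mu> (Suc t) =
     bind_pmf (traj_from f n \<mu> t) (\<lambda>xs. map_pmf (\<lambda>y. xs @ [y]) (ea_step f n (last xs)))"

lemma ea_traj_eq_traj_from: "ea_traj f n t = traj_from f n (pmf_of_set (bitstrings n)) t"
  by (induction t) auto

lemma traj_from_nonempty: "xs \<in> set_pmf (traj_from f n \<mu> t) \<Longrightarrow> xs \<noteq> []"
  by (induction t arbitrary: xs) auto

lemma traj_from_Suc_first_step:
  "traj_from f n \<mu> (Suc t) = bind_pmf \<mu> (\<lambda>x. map_pmf (Cons x) (traj_from f n (ea_step f n x) t))"
proof (induction t)
  case 0
  then show ?case by (simp add: bind_map_pmf map_pmf_comp)
next
  case (Suc t)
  have "traj_from f n \<mu> (Suc (Suc t))
      = bind_pmf \<mu> (\<lambda>x. bind_pmf (traj_from f n (ea_step f n x) t)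
          (\<lambda>ys. map_pmf (\<lambda>y. (x # ys) @ [y]) (ea_step f n (last (x # ys)))))"
    by (simp only: traj_from.simps(2)[of f n \<mu> "Suc t"] Suc bind_assoc_pmf bind_map_pmf)
  also have "\<dots> = bind_pmf \<mu> (\<lambda>x. map_pmf (Cons x) (traj_from f n (ea_step f n x) (Suc t)))"
    by (auto simp: map_bind_pmf map_pmf_comp intro!: bind_pmf_cong dest: traj_from_nonempty)
  finally show ?case .
qed

definition not_opt_traces :: "(bool list \<Rightarrow> real) \<Rightarrow> nat \<Rightarrow> bool list list set" where
  "not_opt_traces f n = {xs. \<forall>x\<in>set xs. f x \<noteq> opt_value f n}"

primrec surv :: "(bool list \<Rightarrow> real) \<Rightarrow> nat \<Rightarrow> nat \<Rightarrow> bool list \<Rightarrow> real" where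
  "surv f n 0 x = (if f x \<noteq> opt_value f n then 1 else 0)"
| "surv f n (Suc t) x =
     (if f x \<noteq> opt_value f n then measure_pmf.expectation (ea_step f n x) (surv f n t) else 0)"

lemma surv_unit: "0 \<le> surv f n t x \<and> surv f n t x \<le> 1"
proof (induction t arbitrary: x)
  case 0
  then show ?case by simp
next
  case (Suc t)
  then show ?case using expectation_unit_valued[of "surv f n t"] by simp
qed

lemma prob_traj_from:
  "measure_pmf.prob (traj_from f n \<mu> t) (not_opt_traces f n) = measure_pmf.expectation \<mu> (surv f n t)"
proof (induction t arbitrary: \<mu>)
  case 0
  have "measure_pmf.prob (traj_from f n \<mu> 0) (not_opt_traces f n)
      = measure_pmf.expectation \<mu> (indicator {x. f x \<noteq> opt_value f n})"
    by (simp add: not_opt_traces_def vimage_def)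
  also have "\<dots> = measure_pmf.expectation \<mu> (surv f n 0)"
    by (rule arg_cong[where f="measure_pmf.expectation \<mu>"]) (auto simp: indicator_def)
  finally show ?case .
next
  case (Suc t)
  have first_step: "measure_pmf.prob (map_pmf (Cons x) (traj_from f n (ea_step f n x) t)) (not_opt_traces f n)
      = surv f n (Suc t) x" for x
    using Suc by (auto simp: not_opt_traces_def vimage_def)
  have "measure_pmf.prob (traj_from f n \<mu> (Suc t)) (not_opt_traces f n)
      = measure_pmf.expectation (traj_from f n \<mu> (Suc t)) (indicator (not_opt_traces f n))"
    by simp
  also have "\<dots> = measure_pmf.expectation \<mu> (\<lambda>x. measure_pmf.prob
                   (map_pmf (Cons x) (traj_from f n (ea_step f n x) t)) (not_opt_traces f n))"
    unfolding traj_from_Suc_first_step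
    by (subst expectation_bind_pmf[where B=1]) (auto simp: indicator_def)
  also have "\<dots> = measure_pmf.expectation \<mu> (surv f n (Suc t))"
    unfolding first_step ..
  finally show ?case .
qed

lemma prob_not_opt_ea_traj:
  "measure_pmf.prob (ea_traj f n t) {xs. \<forall>x\<in>set xs. f x \<noteq> opt_value f n}
   = measure_pmf.expectation (pmf_of_set (bitstrings n)) (surv f n t)"
  using prob_traj_from[of f n "pmf_of_set (bitstrings n)" t]
  by (simp add: ea_traj_eq_traj_from not_opt_traces_def)

lemma ea_step_eq_map_mutate:
  "ea_step f n x = map_pmf (\<lambda>y. if f y \<le> f x then y else x) (mutate (1 / real n) x)"
  unfolding ea_step_def map_pmf_def by simp

section \<open>Comparison of the EA with the distance process\<close>

lemma mutation_rate_bounds: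
  assumes "n > 0"
  shows "0 \<le> 1 / real n" "1 / real n \<le> 1" "2 \<le> n \<Longrightarrow> 1 / real n \<le> 1/2"
  using assms by (auto simp: field_simps)

text \<open>For f with unique optimum z, the EA survives at least as long as the distance
  process: the accepted string is y or x, both at distance at least min d (hamming y z).\<close>
lemma surv_ge_elitist_surv:
  assumes n: "n > 0" and z: "z \<in> bitstrings n"
    and opt_iff: "\<And>x. x \<in> bitstrings n \<Longrightarrow> f x \<noteq> opt_value f n \<longleftrightarrow> x \<noteq> z"
  shows "x \<in> bitstrings n \<Longrightarrow> elitist_surv (1 / real n) n t (hamming x z) \<le> surv f n t x"
proof (induction t arbitrary: x)
  case 0
  then have "hamming x z = 0 \<longleftrightarrow> x = z"
    using z by (intro hamming_eq_0_iff) (auto simp: bitstrings_def)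
  then show ?case
    using opt_iff[OF 0] by auto
next
  case (Suc t)
  let ?p = "1 / real n"
  let ?sel = "\<lambda>y. if f y \<le> f x then y else x"
  have len: "length x = n" "length z = n"
    using Suc.prems z by (auto simp: bitstrings_def)
  define d where "d = hamming x z"
  show ?case
  proof (cases "x = z")
    case True
    then show ?thesis
      using opt_iff[OF z] hamming_eq_0_iff[of z z] by simp
  next
    case False
    then have "d > 0"
      using hamming_eq_0_iff[of x z] len d_def by simp
    then have "elitist_surv ?p n (Suc t) d
        = measure_pmf.expectation (map_pmf (\<lambda>y. hamming y z) (mutate ?p x)) (\<lambda>k. elitist_surv ?p n t (min d k))"
      using hamming_mutate[of x z ?p] len d_def by simp
    also have "\<dots> = measure_pmf.expectation (mutate ?p x) (\<lambda>y. elitist_surv ?p n t (min d (hamming y z)))"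
      by simp
    also have "\<dots> \<le> measure_pmf.expectation (mutate ?p x) (\<lambda>y. surv f n t (?sel y))"
    proof (rule expectation_mono_on_support)
      fix y
      assume y: "y \<in> set_pmf (mutate ?p x)"
      have "elitist_surv ?p n t (min d (hamming y z)) \<le> elitist_surv ?p n t (hamming (?sel y) z)"
        using hamming_le_length[of y z] hamming_le_length[of x z] mutate_length[OF y] len d_def
        by (intro elitist_surv_mono[OF mutation_rate_bounds[OF n]]) auto
      also have "\<dots> \<le> surv f n t (?sel y)"
        using mutate_length[OF y] len by (intro Suc.IH) (auto simp: bitstrings_def)
      finally show "elitist_surv ?p n t (min d (hamming y z)) \<le> surv f n t (?sel y)" .
    qed (use elitist_surv_unit surv_unit in auto)
    also have "\<dots> = surv f n (Suc t) x"
      using opt_iff[OF Suc.prems] False by (simp add: ea_step_eq_map_mutate)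
    finally show ?thesis
      unfolding d_def .
  qed
qed

text \<open>For OneMax the accepted string lies at distance exactly min d k from the zero
  string, so the EA coincides with the distance process.\<close>
lemma surv_onemax:
  assumes n: "n > 0"
  shows "x \<in> bitstrings n \<Longrightarrow> surv onemax n t x = elitist_surv (1 / real n) n t (hamming x (replicate n False))"
proof (induction t arbitrary: x)
  case 0
  then have "onemax x = real (hamming x (replicate n False))"
    using onemax_eq_hamming[of x] by (simp add: bitstrings_def)
  then show ?case
    by (simp add: opt_value_onemax)
next
  case (Suc t)
  let ?p = "1 / real n"
  let ?z = "replicate n False"
  let ?sel = "\<lambda>y. if onemax y \<le> onemax x then y else x"
  have len: "length x = n"
    using Suc.prems by (auto simp: bitstrings_def)
  define d where "d = hamming x ?z"
  have onemax_x: "onemax x = real d"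
    using onemax_eq_hamming[of x] len d_def by simp
  show ?case
  proof (cases "d = 0")
    case True
    then show ?thesis
      using onemax_x d_def by (simp add: opt_value_onemax)
  next
    case False
    have "surv onemax n (Suc t) x = measure_pmf.expectation (mutate ?p x) (\<lambda>y. surv onemax n t (?sel y))"
      using False onemax_x by (simp add: ea_step_eq_map_mutate opt_value_onemax)
    also have "\<dots> = measure_pmf.expectation (mutate ?p x) (\<lambda>y. elitist_surv ?p n t (min d (hamming y ?z)))"
    proof (rule expectation_cong_on_support)
      fix y
      assume y: "y \<in> set_pmf (mutate ?p x)"
      have len_y: "length y = n"
        using mutate_length[OF y] len by simp
      have "hamming (?sel y) ?z = min d (hamming y ?z)"
        using onemax_eq_hamming[of y] onemax_x len_y len d_def by auto
      then show "surv onemax n t (?sel y) = elitist_surv ?p n t (min d (hamming y ?z))"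
        using Suc.IH[of "?sel y"] len len_y by (simp add: bitstrings_def)
    qed
    also have "\<dots> = elitist_surv ?p n (Suc t) d"
      using False hamming_mutate[of x ?z ?p, symmetric] len d_def by simp
    finally show ?thesis
      unfolding d_def .
  qed
qed

lemma prob_not_opt_onemax_le:
  assumes n: "n > 0"
    and unique: "\<exists>!z. z \<in> bitstrings n \<and> (\<forall>y\<in>bitstrings n. f z \<le> f y)"
  shows "measure_pmf.prob (ea_traj onemax n t) {xs. \<forall>x\<in>set xs. onemax x \<noteq> opt_value onemax n}
      \<le> measure_pmf.prob (ea_traj f n t) {xs. \<forall>x\<in>set xs. f x \<noteq> opt_value f n}"
proof -
  obtain z where z: "z \<in> bitstrings n" "\<forall>y\<in>bitstrings n. f z \<le> f y"
    and z_unique: "\<And>w. w \<in> bitstrings n \<Longrightarrow> \<forall>y\<in>bitstrings n. f w \<le> f y \<Longrightarrow> w = z"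
    using unique by blast
  have "opt_value f n = f z"
    unfolding opt_value_def using z finite_bitstrings by (intro Min_eqI) auto
  then have opt_iff: "f x \<noteq> opt_value f n \<longleftrightarrow> x \<noteq> z" if "x \<in> bitstrings n" for x
    using z z_unique[OF that] by force
  let ?U = "pmf_of_set (bitstrings n)"
  let ?p = "1 / real n"
  have set_U: "set_pmf ?U = bitstrings n"
    using finite_bitstrings bitstrings_nonempty by simp
  have "measure_pmf.expectation ?U (surv onemax n t)
      = measure_pmf.expectation ?U (\<lambda>x. elitist_surv ?p n t (hamming x (replicate n False)))"
    by (rule expectation_cong_on_support) (use surv_onemax[OF n] set_U in auto)
  also have "\<dots> = measure_pmf.expectation ?U (\<lambda>x. elitist_surv ?p n t (hamming x z))"
    using sum_hamming_translate[OF z(1), of "elitist_surv ?p n t"] finite_bitstrings bitstrings_nonempty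
    by (simp add: integral_pmf_of_set)
  also have "\<dots> \<le> measure_pmf.expectation ?U (surv f n t)"
    by (rule expectation_mono_on_support)
       (use elitist_surv_unit surv_unit surv_ge_elitist_surv[OF n z(1) opt_iff] set_U in auto)
  finally show ?thesis
    by (simp add: prob_not_opt_ea_traj)
qed

theorem theorem8:
  fixes n :: nat and f :: "bool list \<Rightarrow> real"
  assumes "n > 0"
    and "\<exists>!z. z \<in> bitstrings n \<and> (\<forall>y\<in>bitstrings n. f z \<le> f y)"
  shows "expected_opt_time f n \<ge> expected_opt_time onemax n"
  unfolding expected_opt_time_def
  by (intro suminf_le ennreal_leI prob_not_opt_onemax_le[OF assms]) auto

end
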